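(* Let $N \ge 1$, $\tau > 0$, $\beta > 0$, $\eta > 0$, and let $I_1, \dots, I_N > 0$. Consider the dynamical system in the variables $R_1,\dots,R_N, G$: \[ \tau \frac{dR_i}{dt} = -R_i + \frac{\beta R_i + I_i}{\eta + G}, \quad i = 1,\dots,N, \qquad \tau \frac{dG}{dt} = -G + \sum_{j=1}^N R_j . \] Let $T = \sum_{j=1}^N I_j$ and define \[ G^* = \frac{(\beta - \eta) + \sqrt{(\eta-\beta)^2 + 4T}}{2}, \qquad R_i^* = \frac{I_i}{\eta - \beta + G^*}, \quad i=1,\dots,N. \] Then $(R_1^*,\dots,R_N^*,G^* )$ is the unique steady state of the system with $G^*>0$, and it is an attractor: every eigenvalue of the Jacobian of the system at this steady state has strictly negative real part, so the steady state is locally asymptotically stable.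
   Context: Here $R_i$ are firing rates of excitatory units, $G$ is the activity of a single inhibitory pool, $I_i$ are external inputs, $\beta$ is the self-excitation strength, $\eta$ is a semi-saturation constant and $\tau$ is a time constant. A steady state is a point where all time derivatives vanish. *)

theory Defs
  imports Complex_Main "HOL-Analysis.Derivative" "Jordan_Normal_Form.Char_Poly"
begin

text \<open>State vector x :: nat \<Rightarrow> real with x i = R_(i+1) for i < N and x N = G.
  The vector field (right-hand side of dx/dt) of the system; coordinates beyond N are unused.\<close>
definition rg_field :: "nat \<Rightarrow> real \<Rightarrow> real \<Rightarrow> real \<Rightarrow> (nat \<Rightarrow> real) \<Rightarrow> (nat \<Rightarrow> real) \<Rightarrow> nat \<Rightarrow> real" where
  "rg_field N \<tau> \<beta> \<eta> I x i =
     (if i < N then (- x i + (\<beta> * x i + I i) / (\<eta> + x N)) / \<tau>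
      else if i = N then (- x N + (\<Sum>j<N. x j)) / \<tau>
      else 0)"

definition steady_state :: "nat \<Rightarrow> real \<Rightarrow> real \<Rightarrow> real \<Rightarrow> (nat \<Rightarrow> real) \<Rightarrow> (nat \<Rightarrow> real) \<Rightarrow> bool" where
  "steady_state N \<tau> \<beta> \<eta> I x \<longleftrightarrow> (\<forall>i\<le>N. rg_field N \<tau> \<beta> \<eta> I x i = 0)"

definition jacobian :: "((nat \<Rightarrow> real) \<Rightarrow> nat \<Rightarrow> real) \<Rightarrow> nat \<Rightarrow> (nat \<Rightarrow> real) \<Rightarrow> real mat" where
  "jacobian F n x = mat n n (\<lambda>(i, j). deriv (\<lambda>t. F (x(j := t)) i) (x j))"

end

(*
  At a steady state every R_i equals I_i / (eta - beta + G), so the inhibitory equation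
  G = sum_j R_j becomes the quadratic G (G - (beta - eta)) = T, whose only positive root is G*.
  Up to the factor 1/tau, the Jacobian at any state is an arrowhead matrix: diagonal
  a = beta / (eta + G) - 1, last column c_i = -(beta R_i + I_i) / (eta + G)^2, last row
  (1, ..., 1, -1). At the steady state a < 0 and all c_i < 0. An eigenvector either vanishes
  in its last coordinate, and then the eigenvalue is a, or it determines the eigenvalue mu through
  (mu + 1)(mu - a) = sum_i c_i; this quadratic has positive coefficients, so its roots lie in the
  open left half plane.
*)

theory Submission
  imports Defs
begin

lemma pos_root_of_quadratic_iff:
  fixes b T g :: real
  assumes "T > 0"
  shows "g > 0 \<and> g * (g - b) = T \<longleftrightarrow> g = (b + sqrt (b\<^sup>2 + 4 * T)) / 2"
proof -
  define s where "s = sqrt (b\<^sup>2 + 4 * T)"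
  have s2: "s\<^sup>2 = b\<^sup>2 + 4 * T" and "s \<ge> 0"
    using assms by (simp_all add: s_def add_nonneg_pos)
  have "\<bar>b\<bar> < s"
    using assms by (simp add: s_def real_less_rsqrt)
  show ?thesis
    unfolding s_def[symmetric]
  proof
    assume g: "g > 0 \<and> g * (g - b) = T"
    then have "g - b > 0"
      using assms by (metis zero_less_mult_pos)
    with g have "2 * g - b \<ge> 0"
      by linarith
    have "(2 * g - b)\<^sup>2 = 4 * (g * (g - b)) + b\<^sup>2"
      by (simp add: power2_eq_square algebra_simps)
    also have "\<dots> = s\<^sup>2"
      using g s2 by simp
    finally have "2 * g - b = s"
      using \<open>2 * g - b \<ge> 0\<close> \<open>s \<ge> 0\<close> by (rule power2_eq_imp_eq)
    then show "g = (b + s) / 2"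
      by simp
  next
    assume g: "g = (b + s) / 2"
    have "g > 0"
      using \<open>\<bar>b\<bar> < s\<close> by (simp add: g abs_less_iff)
    moreover have "g * (g - b) = (s\<^sup>2 - b\<^sup>2) / 4"
      by (simp add: g power2_eq_square field_simps)
    ultimately show "g > 0 \<and> g * (g - b) = T"
      using s2 by simp
  qed
qed

lemma quadratic_root_Re_neg:
  fixes z :: complex and p q :: real
  assumes "p > 0" "q > 0" "z\<^sup>2 + p * z + q = 0"
  shows "Re z < 0"
proof -
  have re: "(Re z)\<^sup>2 - (Im z)\<^sup>2 + p * Re z + q = 0" and im: "(2 * Re z + p) * Im z = 0"
    using arg_cong[OF assms(3), of Re] arg_cong[OF assms(3), of Im]
    by (simp_all add: power2_eq_square algebra_simps)
  show ?thesis
  proof (cases "Im z = 0")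
    case True
    then have "(Re z)\<^sup>2 + p * Re z + q = 0"
      using re by simp
    then show ?thesis
      using assms(1,2) by (smt (verit) mult_nonneg_nonneg zero_le_power2)
  next
    case False
    then show ?thesis
      using im assms(1) by simp
  qed
qed

lemma sum_fun_upd:
  fixes f :: "'a \<Rightarrow> 'b :: ab_group_add"
  assumes "finite A" "j \<in> A"
  shows "sum (f(j := t)) A = sum f A - f j + t"
proof -
  have "sum (f(j := t)) A = t + sum (f(j := t)) (A - {j})"
    using assms by (simp add: sum.remove)
  also have "sum (f(j := t)) (A - {j}) = sum f (A - {j})"
    by (rule sum.cong) auto
  finally show ?thesis
    using assms by (simp add: sum.remove)
qed

lemma eigenvalue_smult_mat:
  fixes A :: "'a :: field mat"
  assumes "A \<in> carrier_mat n n" and "eigenvalue (c \<cdot>\<^sub>m A) k" and "c \<noteq> 0"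
  shows "eigenvalue A (k / c)"
proof -
  obtain v where v: "v \<in> carrier_vec n" "v \<noteq> 0\<^sub>v n" and eq: "(c \<cdot>\<^sub>m A) *\<^sub>v v = k \<cdot>\<^sub>v v"
    using assms(1,2) by (auto simp: eigenvalue_def eigenvector_def)
  have "c \<cdot>\<^sub>v (A *\<^sub>v v) = (c \<cdot>\<^sub>m A) *\<^sub>v v"
    using assms(1) v(1) by (intro eq_vecI) (auto simp: scalar_prod_def sum_distrib_left ac_simps)
  then have "(1 / c) \<cdot>\<^sub>v (c \<cdot>\<^sub>v (A *\<^sub>v v)) = (1 / c) \<cdot>\<^sub>v (k \<cdot>\<^sub>v v)"
    using eq by simp
  then have "A *\<^sub>v v = (k / c) \<cdot>\<^sub>v v"
    using assms(3) by (simp add: smult_smult_assoc)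
  moreover have "dim_row A = n"
    using assms(1) by simp
  ultimately show ?thesis
    using v unfolding eigenvalue_def eigenvector_def by blast
qed

lemma map_mat_of_real_smult:
  "map_mat of_real (c \<cdot>\<^sub>m A) = (of_real c :: 'a :: real_algebra_1) \<cdot>\<^sub>m map_mat of_real A"
  by (rule eq_matI) simp_all

definition arrowhead_mat :: "nat \<Rightarrow> real \<Rightarrow> (nat \<Rightarrow> real) \<Rightarrow> real mat" where
  "arrowhead_mat N a c = mat (N + 1) (N + 1) (\<lambda>(i, j).
     if i < N then (if j = i then a else if j = N then c i else 0)
     else if j < N then 1 else -1)"

lemma arrowhead_mat_dim [simp]:
  "dim_row (arrowhead_mat N a c) = N + 1" "dim_col (arrowhead_mat N a c) = N + 1"
  by (simp_all add: arrowhead_mat_def)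

lemma arrowhead_mat_mult_vec:
  fixes v :: "complex vec"
  assumes "v \<in> carrier_vec (N + 1)"
  shows "i < N \<Longrightarrow> (map_mat of_real (arrowhead_mat N a c) *\<^sub>v v) $ i = a * v $ i + c i * v $ N"
    and "(map_mat of_real (arrowhead_mat N a c) *\<^sub>v v) $ N = (\<Sum>j<N. v $ j) - v $ N"
  using assms by (auto simp: arrowhead_mat_def scalar_prod_def atLeast0LessThan
      if_distrib[of complex_of_real] if_distrib[where f = "\<lambda>x. x * _"] cong: if_cong)

lemma arrowhead_mat_eigenvalue_Re_neg:
  assumes "a < 0" and "(\<Sum>i<N. c i) < 0"
    and "eigenvalue (map_mat complex_of_real (arrowhead_mat N a c)) \<mu>"
  shows "Re \<mu> < 0"
proof -
  obtain v where v: "v \<in> carrier_vec (N + 1)" "v \<noteq> 0\<^sub>v (N + 1)"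
    and ev: "map_mat complex_of_real (arrowhead_mat N a c) *\<^sub>v v = \<mu> \<cdot>\<^sub>v v"
    using assms(3) by (auto simp: eigenvalue_def eigenvector_def)
  have row: "(\<mu> - a) * v $ i = c i * v $ N" if "i < N" for i
    using arg_cong[OF ev, of "\<lambda>w. w $ i"] arrowhead_mat_mult_vec(1)[OF v(1) that] v(1) that
    by (simp add: algebra_simps)
  have last_row: "(\<Sum>j<N. v $ j) - v $ N = \<mu> * v $ N"
    using arg_cong[OF ev, of "\<lambda>w. w $ N"] arrowhead_mat_mult_vec(2)[OF v(1)] v(1) by simp
  show ?thesis
  proof (cases "v $ N = 0")
    case True
    obtain i where "i < N + 1" "v $ i \<noteq> 0"
      using v by (metis carrier_vecD eq_vecI index_zero_vec)
    with True row have "\<mu> = a"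
      by (metis less_Suc_eq Suc_eq_plus1 mult_eq_0_iff right_minus_eq)
    then show ?thesis
      using assms(1) by simp
  next
    case False
    have "\<mu> \<noteq> a"
    proof
      assume "\<mu> = a"
      then have "c i = 0" if "i < N" for i
        using row[OF that] False by simp
      then show False
        using assms(2) by simp
    qed
    then have "v $ j = c j * v $ N / (\<mu> - a)" if "j < N" for j
      using row[OF that] by (simp add: field_simps)
    then have "(\<Sum>j<N. v $ j) = of_real (\<Sum>j<N. c j) * v $ N / (\<mu> - a)"
      by (simp add: sum_divide_distrib sum_distrib_right)
    with last_row have "(of_real (\<Sum>j<N. c j) / (\<mu> - a) - (\<mu> + 1)) * v $ N = 0"
      by (simp add: algebra_simps)
    then have "of_real (\<Sum>j<N. c j) / (\<mu> - a) = \<mu> + 1"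
      using False by simp
    then have "of_real (\<Sum>j<N. c j) = (\<mu> + 1) * (\<mu> - a)"
      using \<open>\<mu> \<noteq> a\<close> by (simp add: field_simps)
    then have "\<mu>\<^sup>2 + of_real (1 - a) * \<mu> + of_real (- a - (\<Sum>j<N. c j)) = 0"
      by (simp add: algebra_simps power2_eq_square)
    then show ?thesis
      using assms(1,2) by (intro quadratic_root_Re_neg[of "1 - a" "- a - (\<Sum>j<N. c j)"]) simp_all
  qed
qed

lemma steady_state_rg_field_iff:
  assumes "\<tau> \<noteq> 0" and "\<eta> + x N \<noteq> 0"
  shows "steady_state N \<tau> \<beta> \<eta> I x \<longleftrightarrow>
    (\<forall>i<N. x i * (\<eta> - \<beta> + x N) = I i) \<and> x N = (\<Sum>j<N. x j)"
proof -
  have "rg_field N \<tau> \<beta> \<eta> I x i = 0 \<longleftrightarrow> x i * (\<eta> - \<beta> + x N) = I i" if "i < N" for i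
  proof -
    have "rg_field N \<tau> \<beta> \<eta> I x i = 0 \<longleftrightarrow> (\<beta> * x i + I i) / (\<eta> + x N) = x i"
      using assms(1) that by (auto simp: rg_field_def)
    also have "\<dots> \<longleftrightarrow> \<beta> * x i + I i = x i * (\<eta> + x N)"
      using assms(2) by (simp add: divide_eq_eq)
    also have "\<dots> \<longleftrightarrow> x i * (\<eta> - \<beta> + x N) = I i"
      by (auto simp: algebra_simps)
    finally show ?thesis .
  qed
  moreover have "rg_field N \<tau> \<beta> \<eta> I x N = 0 \<longleftrightarrow> x N = (\<Sum>j<N. x j)"
    using assms by (auto simp: rg_field_def)
  ultimately show ?thesis
    unfolding steady_state_def by (metis le_less nat_less_le)
qed

lemma steady_state_rg_field_pos_iff:
  fixes \<tau> \<beta> \<eta> :: real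
  assumes "\<tau> \<noteq> 0" and "\<eta> > 0" and "N \<ge> 1" and "\<forall>i<N. I i > 0" and "x N > 0"
  defines "Gs \<equiv> ((\<beta> - \<eta>) + sqrt ((\<eta> - \<beta>)\<^sup>2 + 4 * (\<Sum>j<N. I j))) / 2"
  shows "steady_state N \<tau> \<beta> \<eta> I x \<longleftrightarrow> x N = Gs \<and> (\<forall>i<N. x i = I i / (\<eta> - \<beta> + Gs))"
proof -
  define T where "T = (\<Sum>j<N. I j)"
  have "T > 0"
    using assms(3,4) unfolding T_def by (intro sum_pos) (auto simp: lessThan_empty_iff)
  have root: "g > 0 \<and> g * (\<eta> - \<beta> + g) = T \<longleftrightarrow> g = Gs" for g
    using pos_root_of_quadratic_iff[OF \<open>T > 0\<close>, of g "\<beta> - \<eta>"]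
    by (simp add: Gs_def T_def power2_commute algebra_simps)
  have steady_iff: "steady_state N \<tau> \<beta> \<eta> I x \<longleftrightarrow>
      (\<forall>i<N. x i * (\<eta> - \<beta> + x N) = I i) \<and> x N = (\<Sum>j<N. x j)"
    using assms(1,2,5) by (intro steady_state_rg_field_iff) auto
  show ?thesis
  proof
    assume "steady_state N \<tau> \<beta> \<eta> I x"
    then have xi: "\<forall>i<N. x i * (\<eta> - \<beta> + x N) = I i" and xN: "x N = (\<Sum>j<N. x j)"
      using steady_iff by auto
    have "x 0 * (\<eta> - \<beta> + x N) > 0"
      using xi assms(3,4) by simp
    then have D: "\<eta> - \<beta> + x N \<noteq> 0"
      by auto
    with xi have xi': "\<forall>i<N. x i = I i / (\<eta> - \<beta> + x N)"
      by (simp add: eq_divide_eq)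
    with xN have "x N = T / (\<eta> - \<beta> + x N)"
      by (simp add: T_def sum_divide_distrib)
    with D have "x N * (\<eta> - \<beta> + x N) = T"
      by (simp add: field_simps)
    with root assms(5) have "x N = Gs"
      by blast
    with xi' show "x N = Gs \<and> (\<forall>i<N. x i = I i / (\<eta> - \<beta> + Gs))"
      by simp
  next
    assume H: "x N = Gs \<and> (\<forall>i<N. x i = I i / (\<eta> - \<beta> + Gs))"
    with root have T: "x N * (\<eta> - \<beta> + x N) = T"
      by blast
    with \<open>T > 0\<close> have D: "\<eta> - \<beta> + x N \<noteq> 0"
      by auto
    from H have "(\<Sum>j<N. x j) = T / (\<eta> - \<beta> + x N)"
      by (simp add: T_def sum_divide_distrib)
    also have "\<dots> = x N"
      using T D by (simp add: field_simps)
    finally show "steady_state N \<tau> \<beta> \<eta> I x"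
      using steady_iff H D by simp
  qed
qed

lemma has_real_derivative_rg_field_upd:
  assumes "i \<le> N" and "j \<le> N" and "\<eta> + x N \<noteq> 0"
  shows "((\<lambda>t. rg_field N \<tau> \<beta> \<eta> I (x(j := t)) i) has_real_derivative
    arrowhead_mat N (\<beta> / (\<eta> + x N) - 1) (\<lambda>k. - (\<beta> * x k + I k) / (\<eta> + x N)\<^sup>2) $$ (i, j) / \<tau>)
    (at (x j))"
proof -
  obtain f where f: "(\<lambda>t. rg_field N \<tau> \<beta> \<eta> I (x(j := t)) i) = (\<lambda>t. f t / \<tau>)"
    and f': "(f has_real_derivative
      arrowhead_mat N (\<beta> / (\<eta> + x N) - 1) (\<lambda>k. - (\<beta> * x k + I k) / (\<eta> + x N)\<^sup>2) $$ (i, j))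
      (at (x j))"
  proof -
    consider "i < N" "j = i" | "i < N" "j < N" "j \<noteq> i" | "i < N" "j = N" | "i = N" "j < N"
      | "i = N" "j = N"
      using assms(1,2) by linarith
    then show thesis
    proof cases
      case 1
      show thesis
        by (rule that[of "\<lambda>t. - t + (\<beta> * t + I i) / (\<eta> + x N)"])
          (use 1 assms(3) in \<open>auto intro!: derivative_eq_intros simp: rg_field_def arrowhead_mat_def\<close>)
    next
      case 2
      show thesis
        by (rule that[of "\<lambda>t. - x i + (\<beta> * x i + I i) / (\<eta> + x N)"])
          (use 2 in \<open>auto intro!: derivative_eq_intros simp: rg_field_def arrowhead_mat_def\<close>)
    next
      case 3
      show thesis
        by (rule that[of "\<lambda>t. - x i + (\<beta> * x i + I i) / (\<eta> + t)"])
          (use 3 assms(3) in \<open>auto intro!: derivative_eq_intros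
            simp: rg_field_def arrowhead_mat_def power2_eq_square\<close>)
    next
      case 4
      show thesis
        by (rule that[of "\<lambda>t. - x N + ((\<Sum>k<N. x k) - x j + t)"])
          (use 4 in \<open>auto intro!: derivative_eq_intros
            simp: rg_field_def arrowhead_mat_def sum_fun_upd fun_upd_other simp del: fun_upd_apply\<close>)
    next
      case 5
      show thesis
        by (rule that[of "\<lambda>t. - t + (\<Sum>k<N. x k)"])
          (use 5 in \<open>auto intro!: derivative_eq_intros simp: rg_field_def arrowhead_mat_def\<close>)
    qed
  qed
  show ?thesis
    unfolding f using f' by (rule DERIV_cdivide)
qed

lemma jacobian_rg_field:
  assumes "\<eta> + x N \<noteq> 0"
  shows "jacobian (rg_field N \<tau> \<beta> \<eta> I) (N + 1) x =
    (1 / \<tau>) \<cdot>\<^sub>m arrowhead_mat N (\<beta> / (\<eta> + x N) - 1) (\<lambda>k. - (\<beta> * x k + I k) / (\<eta> + x N)\<^sup>2)"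
    (is "_ = (1 / \<tau>) \<cdot>\<^sub>m ?A")
proof (rule eq_matI)
  fix i j
  assume "i < dim_row ((1 / \<tau>) \<cdot>\<^sub>m ?A)" and "j < dim_col ((1 / \<tau>) \<cdot>\<^sub>m ?A)"
  then have "i \<le> N" and "j \<le> N"
    by simp_all
  then have "deriv (\<lambda>t. rg_field N \<tau> \<beta> \<eta> I (x(j := t)) i) (x j) = ?A $$ (i, j) / \<tau>"
    using assms by (intro DERIV_imp_deriv has_real_derivative_rg_field_upd)
  with \<open>i \<le> N\<close> \<open>j \<le> N\<close>
  show "jacobian (rg_field N \<tau> \<beta> \<eta> I) (N + 1) x $$ (i, j) = ((1 / \<tau>) \<cdot>\<^sub>m ?A) $$ (i, j)"
    by (simp add: jacobian_def)
qed (simp_all add: jacobian_def)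

lemma rg_field_jacobian_eigenvalue_Re_neg:
  assumes "\<tau> > 0" and "0 < \<eta> + x N" and "\<beta> < \<eta> + x N"
    and "N > 0" and "\<forall>i<N. 0 < \<beta> * x i + I i"
    and "eigenvalue (map_mat complex_of_real (jacobian (rg_field N \<tau> \<beta> \<eta> I) (N + 1) x)) k"
  shows "Re k < 0"
proof -
  define a where "a = \<beta> / (\<eta> + x N) - 1"
  define c where "c = (\<lambda>i. - (\<beta> * x i + I i) / (\<eta> + x N)\<^sup>2)"
  have "a < 0"
    using assms(2,3) by (simp add: a_def)
  have "c i < 0" if "i < N" for i
    unfolding c_def using assms(2,5) that by (intro divide_neg_pos) auto
  then have "(\<Sum>i<N. c i) < (\<Sum>i<N. 0)"
    using assms(4) by (intro sum_strict_mono) (auto simp: lessThan_empty_iff)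
  have "eigenvalue (complex_of_real (1 / \<tau>) \<cdot>\<^sub>m map_mat complex_of_real (arrowhead_mat N a c)) k"
    using assms(6) jacobian_rg_field[of \<eta> x N \<tau> \<beta> I] assms(2)
    by (simp add: a_def c_def map_mat_of_real_smult)
  then have "eigenvalue (map_mat complex_of_real (arrowhead_mat N a c)) (k / complex_of_real (1 / \<tau>))"
    using assms(1) by (intro eigenvalue_smult_mat[where n = "N + 1"]) (auto intro: carrier_matI)
  then have "Re (k / complex_of_real (1 / \<tau>)) < 0"
    using \<open>a < 0\<close> \<open>(\<Sum>i<N. c i) < (\<Sum>i<N. 0)\<close> by (intro arrowhead_mat_eigenvalue_Re_neg) simp_all
  then show ?thesis
    using assms(1) by (simp add: mult_less_0_iff)
qed

theorem theorem2:
  fixes N :: nat and \<tau> \<beta> \<eta> :: real and I :: "nat \<Rightarrow> real"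
  assumes "N \<ge> 1" and "\<tau> > 0" and "\<beta> > 0" and "\<eta> > 0"
    and "\<forall>i<N. I i > 0"
  defines "T \<equiv> (\<Sum>j<N. I j)"
  defines "Gs \<equiv> ((\<beta> - \<eta>) + sqrt ((\<eta> - \<beta>)^2 + 4 * T)) / 2"
  defines "xs \<equiv> (\<lambda>i. if i < N then I i / (\<eta> - \<beta> + Gs) else if i = N then Gs else 0)"
  shows "steady_state N \<tau> \<beta> \<eta> I xs \<and> xs N > 0
    \<and> (\<forall>x. steady_state N \<tau> \<beta> \<eta> I x \<and> x N > 0 \<longrightarrow> (\<forall>i\<le>N. x i = xs i))
    \<and> (\<forall>k. eigenvalue (map_mat complex_of_real (jacobian (rg_field N \<tau> \<beta> \<eta> I) (N + 1) xs)) k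
            \<longrightarrow> Re k < 0)"
proof -
  have "T > 0"
    using assms(1,5) unfolding T_def by (intro sum_pos) (auto simp: lessThan_empty_iff)
  then have Gs: "Gs > 0 \<and> Gs * (Gs - (\<beta> - \<eta>)) = T"
    using pos_root_of_quadratic_iff[of T Gs "\<beta> - \<eta>"] by (simp add: Gs_def power2_commute)
  then have "\<eta> - \<beta> + Gs > 0"
    using \<open>T > 0\<close> zero_less_mult_pos[of Gs "Gs - (\<beta> - \<eta>)"] by simp
  have steady_iff: "steady_state N \<tau> \<beta> \<eta> I x \<longleftrightarrow> x N = Gs \<and> (\<forall>i<N. x i = I i / (\<eta> - \<beta> + Gs))"
    if "x N > 0" for x
    using steady_state_rg_field_pos_iff[of \<tau> \<eta> N I x \<beta>] assms(1,2,4,5) that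
    by (simp add: Gs_def T_def)
  have "steady_state N \<tau> \<beta> \<eta> I xs" and "xs N > 0"
    using steady_iff[of xs] Gs by (simp_all add: xs_def)
  moreover have "\<forall>x. steady_state N \<tau> \<beta> \<eta> I x \<and> x N > 0 \<longrightarrow> (\<forall>i\<le>N. x i = xs i)"
    using steady_iff by (auto simp: xs_def le_less)
  moreover have "Re k < 0"
    if "eigenvalue (map_mat complex_of_real (jacobian (rg_field N \<tau> \<beta> \<eta> I) (N + 1) xs)) k" for k
  proof (rule rg_field_jacobian_eigenvalue_Re_neg[OF assms(2) _ _ _ _ that])
    show "\<forall>i<N. 0 < \<beta> * xs i + I i"
      using assms(3,5) \<open>\<eta> - \<beta> + Gs > 0\<close> by (simp add: xs_def add_pos_pos)
  qed (use assms(1,4) Gs \<open>\<eta> - \<beta> + Gs > 0\<close> in \<open>simp_all add: xs_def\<close>)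
  ultimately show ?thesis
    by blast
qed

end
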